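(* Let $(F_n)_{n\ge 0}$ be the Fibonacci sequence with $F_0=0$, $F_1=1$, $F_n=F_{n-1}+F_{n-2}$ for $n\ge2$. For every integer $k\in\mathbb{Z}$ (possibly negative) and every integer $m\ge 0$, $$[\underbrace{4,4,\dots,4}_{m},\,2k+3]=\frac{F_{3m+4}+k\,F_{3m+3}}{F_{3m+1}+k\,F_{3m}},$$ where the continued fraction has $m+1$ entries $a_0,\dots,a_m$ with $a_i=4$ for $0\le i<m$ and $a_m=2k+3$.
   Context: For numbers $a_0,a_1,\dots,a_m$, the finite continued fraction $[a_0,a_1,\dots,a_m]$ denotes $a_0+\cfrac{1}{a_1+\cfrac{1}{\ddots+\cfrac{1}{a_m}}}$, evaluated as a rational number; $[a_0]=a_0$. *)

theory Defs
  imports Main "HOL-Number_Theory.Fib"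
begin

text \<open>Finite continued fraction [a0,...,am] evaluated in the rationals; [a0] = a0.
  The empty list is never used (value 0 by convention).\<close>
fun cfrac :: "rat list \<Rightarrow> rat" where
  "cfrac [] = 0"
| "cfrac [a] = a"
| "cfrac (a # b # cs) = a + 1 / cfrac (b # cs)"

end

theory Submission
  imports Defs
begin

text \<open>Prepending a 4 maps a fraction \<open>N/D\<close> to \<open>(4N + D)/N\<close>, and the identity
  \<open>F(n+6) = 4 F(n+3) + F(n)\<close> shows that this shifts all Fibonacci indices by 3, so the
  claim follows by induction on \<open>m\<close>. The step needs the numerator \<open>F(3m+4) + k F(3m+3)\<close>
  to be nonzero, which holds because \<open>F(3m+4) / F(3m+3)\<close> lies strictly between 1 and 2.\<close>

lemma cfrac_Cons: "xs \<noteq> [] \<Longrightarrow> cfrac (a # xs) = a + 1 / cfrac xs"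
  by (cases xs) auto

lemma cfrac_replicate_Suc:
  "cfrac (replicate (Suc m) a @ [x]) = a + 1 / cfrac (replicate m a @ [x])"
  by (simp add: cfrac_Cons)

lemma fib_add_6: "fib (n + 6) = 4 * fib (n + 3) + fib n"
  by (simp add: numeral_eq_Suc)

lemma fib_less_fib_Suc: "3 \<le> n \<Longrightarrow> fib n < fib (Suc n)"
  by (cases n rule: fib.cases) (auto simp: fib_neq_0_nat)

lemma fib_Suc_less_double: "3 \<le> n \<Longrightarrow> fib (Suc n) < 2 * fib n"
  by (cases n rule: fib.cases) (auto simp: fib_neq_0_nat)

lemma add_mult_neq_0_if_between:
  fixes a b k :: int
  assumes "b < a" "a < 2 * b"
  shows "a + k * b \<noteq> 0"
proof
  assume "a + k * b = 0"
  then have a: "a = (- k) * b" by simp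
  have "0 < b" using assms by simp
  have "1 * b < (- k) * b" "(- k) * b < 2 * b"
    using assms unfolding a by simp_all
  then have "1 < - k" "- k < 2"
    using mult_less_cancel_right_pos[OF \<open>0 < b\<close>] by blast+
  then show False by simp
qed

lemma fib_Suc_add_mult_fib_neq_0:
  assumes "3 \<le> n"
  shows "(of_nat (fib (Suc n)) + of_int k * of_nat (fib n) :: 'a :: ring_char_0) \<noteq> 0"
proof -
  have "int (fib (Suc n)) + k * int (fib n) \<noteq> 0"
    using fib_less_fib_Suc[OF assms] fib_Suc_less_double[OF assms]
    by (intro add_mult_neq_0_if_between) simp_all
  then have "(of_int (int (fib (Suc n)) + k * int (fib n)) :: 'a) \<noteq> 0"
    unfolding of_int_eq_0_iff .
  then show ?thesis by simp
qed

theorem corollary2: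
  fixes k :: int and m :: nat
  shows "cfrac (replicate m 4 @ [of_int (2 * k + 3)]) =
    (of_nat (fib (3 * m + 4)) + of_int k * of_nat (fib (3 * m + 3))) /
    (of_nat (fib (3 * m + 1)) + of_int k * of_nat (fib (3 * m)))"
proof (induction m)
  case 0
  then show ?case by (simp add: numeral_eq_Suc)
next
  case (Suc m)
  define N :: rat where "N = of_nat (fib (3 * m + 4)) + of_int k * of_nat (fib (3 * m + 3))"
  define D :: rat where "D = of_nat (fib (3 * m + 1)) + of_int k * of_nat (fib (3 * m))"
  have shift: "3 * Suc m = 3 * m + 3" "Suc (3 * m + 3) = 3 * m + 4" "3 * m + 3 + 1 = 3 * m + 4"
    by simp_all
  have "N \<noteq> 0"
    using fib_Suc_add_mult_fib_neq_0[of "3 * m + 3" k] unfolding N_def shift(2) by simp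
  have "cfrac (replicate (Suc m) 4 @ [of_int (2 * k + 3)]) = 4 + 1 / (N / D)"
    unfolding cfrac_replicate_Suc Suc.IH N_def D_def ..
  also have "\<dots> = (4 * N + D) / N"
    using \<open>N \<noteq> 0\<close> by (simp add: field_simps)
  also have "4 * N + D = of_nat (fib (3 * Suc m + 4)) + of_int k * of_nat (fib (3 * Suc m + 3))"
    using fib_add_6[of "3 * m + 1"] fib_add_6[of "3 * m"]
    by (simp add: N_def D_def algebra_simps)
  also have "N = of_nat (fib (3 * Suc m + 1)) + of_int k * of_nat (fib (3 * Suc m))"
    unfolding N_def shift(1,3) ..
  finally show ?case .
qed

end
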